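(* Let $Q=[u_1,\dots,u_n]\subset\mathbb{S}^2$ with $n\ge 6$ be a spherical polygon not contained in any closed hemisphere, without self-intersections and antipodal intersections, with exactly two essential vertices. Then the two essential vertices are not consecutive in $Q$.
   Context: A spherical polygon has edges the minimal great-circle arcs between consecutive vertices (indices mod $n$); no three vertices lie on a common great circle. A set is balanced if not contained in any closed hemisphere; for balanced $Q$, $u_m$ is essential if the vertex set minus $u_m$ is not balanced. Self-intersection: two non-adjacent edges intersect; antipodal intersection: non-adjacent edges $e,f$ with $e\cap(-f)\neq\emptyset$. *)

theory Defs
  imports "HOL-Analysis.Analysis"
begin

type_synonym pt = "real^3"

text \<open>Minimal great-circle arc between two non-antipodal unit vectors a, b:
  the unit vectors in the convex cone spanned by a and b.\<close>
definition sph_arc :: "pt \<Rightarrow> pt \<Rightarrow> pt set" where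
  "sph_arc a b = {x. norm x = 1 \<and> (\<exists>s t. s \<ge> 0 \<and> t \<ge> 0 \<and> x = s *\<^sub>R a + t *\<^sub>R b)}"

definition closed_hemisphere :: "pt \<Rightarrow> pt set" where
  "closed_hemisphere v = {x. norm x = 1 \<and> v \<bullet> x \<ge> 0}"

definition in_closed_hemisphere :: "pt set \<Rightarrow> bool" where
  "in_closed_hemisphere S \<longleftrightarrow> (\<exists>v. v \<noteq> 0 \<and> S \<subseteq> closed_hemisphere v)"

definition balanced :: "pt set \<Rightarrow> bool" where
  "balanced S \<longleftrightarrow> \<not> in_closed_hemisphere S"

text \<open>A spherical polygon [u_0,...,u_{n-1}] is given by u :: nat => pt and n;
  indices are taken mod n.\<close>
definition vertex_set :: "(nat \<Rightarrow> pt) \<Rightarrow> nat \<Rightarrow> pt set" where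
  "vertex_set u n = u ` {..<n}"

definition edge :: "(nat \<Rightarrow> pt) \<Rightarrow> nat \<Rightarrow> nat \<Rightarrow> pt set" where
  "edge u n i = sph_arc (u (i mod n)) (u (Suc i mod n))"

definition spherical_polygon :: "(nat \<Rightarrow> pt) \<Rightarrow> nat \<Rightarrow> bool" where
  "spherical_polygon u n \<longleftrightarrow> n \<ge> 3 \<and> (\<forall>i<n. norm (u i) = 1) \<and>
     (\<forall>i<n. \<forall>j<n. \<forall>k<n. i \<noteq> j \<and> j \<noteq> k \<and> i \<noteq> k \<longrightarrow>
        \<not> (\<exists>v. v \<noteq> 0 \<and> v \<bullet> u i = 0 \<and> v \<bullet> u j = 0 \<and> v \<bullet> u k = 0))"

definition nonadjacent_edges :: "nat \<Rightarrow> nat \<Rightarrow> nat \<Rightarrow> bool" where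
  "nonadjacent_edges n i j \<longleftrightarrow> i < n \<and> j < n \<and> i \<noteq> j \<and> j \<noteq> Suc i mod n \<and> i \<noteq> Suc j mod n"

definition self_intersecting :: "(nat \<Rightarrow> pt) \<Rightarrow> nat \<Rightarrow> bool" where
  "self_intersecting u n \<longleftrightarrow>
     (\<exists>i j. nonadjacent_edges n i j \<and> edge u n i \<inter> edge u n j \<noteq> {})"

definition antipodal_intersecting :: "(nat \<Rightarrow> pt) \<Rightarrow> nat \<Rightarrow> bool" where
  "antipodal_intersecting u n \<longleftrightarrow>
     (\<exists>i j. nonadjacent_edges n i j \<and> edge u n i \<inter> uminus ` edge u n j \<noteq> {})"

definition essential :: "(nat \<Rightarrow> pt) \<Rightarrow> nat \<Rightarrow> nat \<Rightarrow> bool" where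
  "essential u n m \<longleftrightarrow> m < n \<and> \<not> balanced (vertex_set u n - {u m})"

end

theory Submission
  imports Defs
begin

(* Suppose u_i and u_(i+1) are both essential. The polygon is balanced, so it has vertices
   strictly on both sides of the great circle through u_i and u_(i+1); hence some edge
   [u_d, u_(d+1)] not adjacent to [u_i, u_(i+1)] crosses that circle, at a point
   z = alpha u_i + beta u_(i+1). Essentiality of u_i yields a closed hemisphere containing all
   vertices but u_i; it contains z, which rules out alpha > 0 > beta, and symmetrically u_(i+1)
   rules out beta > 0 > alpha. So z or -z lies on [u_i, u_(i+1)]: a self-intersection or an
   antipodal intersection. *)

lemma cross3_decomposition:
  fixes a b q :: "real^3"
  defines "N \<equiv> cross3 a b"
  shows "(N \<bullet> N) *\<^sub>R q = (cross3 q b \<bullet> N) *\<^sub>R a + (cross3 a q \<bullet> N) *\<^sub>R b + (q \<bullet> N) *\<^sub>R N"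
  unfolding N_def vec_eq_iff forall_3 by (simp add: cross3_simps)

lemma common_normal_if_triple_product_zero:
  fixes a b c :: "real^3"
  assumes "cross3 a b \<bullet> c = 0"
  shows "\<exists>v. v \<noteq> 0 \<and> v \<bullet> a = 0 \<and> v \<bullet> b = 0 \<and> v \<bullet> c = 0"
proof -
  let ?A = "vector [a, b, c] :: real^3^3"
  have "det ?A = 0"
    by (metis assms cross_triple dot_cross_det inner_commute)
  then obtain v where "v \<noteq> 0" "?A *v v = 0"
    using matrix_nonfull_linear_equations_eq det_eq_0_rank by (metis less_irrefl)
  then have "?A $ k \<bullet> v = 0" for k
    by (metis matrix_vector_mul_component zero_index)
  from this [of 1] this [of 2] this [of 3] \<open>v \<noteq> 0\<close> show ?thesis
    by (auto simp: inner_commute)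
qed

lemma orthogonal_cross3_imp_combination:
  fixes a b q :: "real^3"
  assumes "q \<bullet> cross3 a b = 0" and "cross3 a b \<noteq> 0"
  obtains \<alpha> \<beta> where "q = \<alpha> *\<^sub>R a + \<beta> *\<^sub>R b"
proof -
  let ?N = "cross3 a b"
  have "q = inverse (?N \<bullet> ?N) *\<^sub>R ((?N \<bullet> ?N) *\<^sub>R q)"
    using assms(2) by simp
  also have "\<dots> = ((cross3 q b \<bullet> ?N) / (?N \<bullet> ?N)) *\<^sub>R a + ((cross3 a q \<bullet> ?N) / (?N \<bullet> ?N)) *\<^sub>R b"
    using cross3_decomposition [of a b q] assms(1) by (simp add: scaleR_add_right divide_inverse_commute)
  finally show thesis
    by (rule that)
qed

lemma nat_sign_change:
  fixes g :: "nat \<Rightarrow> real"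
  assumes "a \<le> b" and "g a * g b < 0"
  shows "\<exists>k\<in>{a..<b}. g k * g (Suc k) \<le> 0"
  using assms
proof (induction b rule: dec_induct)
  case base
  then show ?case
    by (simp add: mult_less_0_iff)
next
  case (step m)
  show ?case
  proof (cases "g a * g m < 0")
    case True
    with step.IH show ?thesis
      by auto
  next
    case False
    with step.prems have "g m * g (Suc m) \<le> 0"
      by (auto simp: mult_less_0_iff mult_le_0_iff)
    with step.hyps show ?thesis
      by auto
  qed
qed

lemma inner_sph_arc_nonneg:
  assumes "z \<in> sph_arc x y" and "0 \<le> v \<bullet> x" and "0 \<le> v \<bullet> y"
  shows "0 \<le> v \<bullet> z"
  using assms unfolding sph_arc_def by (auto simp: inner_add_right)

lemma sph_arc_meets_plane:
  fixes x y N :: "real^3"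
  assumes "cross3 x y \<noteq> 0" and "(N \<bullet> x) * (N \<bullet> y) < 0"
  obtains z where "z \<in> sph_arc x y" and "N \<bullet> z = 0"
proof -
  define s t where "s = \<bar>N \<bullet> y\<bar>" and "t = \<bar>N \<bullet> x\<bar>"
  define q where "q = s *\<^sub>R x + t *\<^sub>R y"
  have st: "s > 0" "t > 0"
    using assms(2) unfolding s_def t_def by (auto simp: mult_less_0_iff)
  have "N \<bullet> q = 0"
    using assms(2) unfolding q_def s_def t_def by (auto simp: inner_add_right mult_less_0_iff)
  have "cross3 q y = s *\<^sub>R cross3 x y"
    unfolding q_def by (simp add: cross_add_left cross_mult_left cross_mult_right)
  then have "q \<noteq> 0"
    using assms(1) st by auto
  define z where "z = (1 / norm q) *\<^sub>R q"
  have "z = (s / norm q) *\<^sub>R x + (t / norm q) *\<^sub>R y"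
    unfolding z_def q_def by (simp add: scaleR_add_right)
  moreover have "norm z = 1" "0 \<le> s / norm q" "0 \<le> t / norm q"
    using \<open>q \<noteq> 0\<close> st unfolding z_def by auto
  ultimately have "z \<in> sph_arc x y"
    unfolding sph_arc_def by blast
  moreover have "N \<bullet> z = 0"
    using \<open>N \<bullet> q = 0\<close> unfolding z_def by simp
  ultimately show thesis
    by (rule that)
qed

lemma separated_combination_signs:
  fixes a b v1 v2 :: "real^3"
  assumes "v1 \<bullet> a < 0" "0 \<le> v1 \<bullet> b" and "v2 \<bullet> b < 0" "0 \<le> v2 \<bullet> a"
    and "0 \<le> v1 \<bullet> (\<alpha> *\<^sub>R a + \<beta> *\<^sub>R b)" "0 \<le> v2 \<bullet> (\<alpha> *\<^sub>R a + \<beta> *\<^sub>R b)"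
  shows "(0 \<le> \<alpha> \<and> 0 \<le> \<beta>) \<or> (\<alpha> \<le> 0 \<and> \<beta> \<le> 0)"
proof -
  have ineq: "0 \<le> \<alpha> * (v1 \<bullet> a) + \<beta> * (v1 \<bullet> b)" "0 \<le> \<alpha> * (v2 \<bullet> a) + \<beta> * (v2 \<bullet> b)"
    using assms(5,6) by (simp_all add: inner_add_right)
  have "\<not> (0 < \<alpha> \<and> \<beta> < 0)"
  proof
    assume "0 < \<alpha> \<and> \<beta> < 0"
    then have "\<alpha> * (v1 \<bullet> a) < 0" "\<beta> * (v1 \<bullet> b) \<le> 0"
      using assms(1,2) by (simp_all add: mult_pos_neg mult_nonpos_nonneg)
    with ineq(1) show False
      by linarith
  qed
  moreover have "\<not> (0 < \<beta> \<and> \<alpha> < 0)"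
  proof
    assume "0 < \<beta> \<and> \<alpha> < 0"
    then have "\<beta> * (v2 \<bullet> b) < 0" "\<alpha> * (v2 \<bullet> a) \<le> 0"
      using assms(3,4) by (simp_all add: mult_pos_neg mult_nonpos_nonneg)
    with ineq(2) show False
      by linarith
  qed
  ultimately show ?thesis
    by linarith
qed

lemma crossing_arc_meets_arc_or_antipode:
  fixes a b x y v1 v2 :: "real^3"
  assumes cross: "cross3 x y \<noteq> 0" "(cross3 a b \<bullet> x) * (cross3 a b \<bullet> y) < 0"
    and v1: "v1 \<bullet> a < 0" "0 \<le> v1 \<bullet> b" "0 \<le> v1 \<bullet> x" "0 \<le> v1 \<bullet> y"
    and v2: "v2 \<bullet> b < 0" "0 \<le> v2 \<bullet> a" "0 \<le> v2 \<bullet> x" "0 \<le> v2 \<bullet> y"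
  shows "sph_arc a b \<inter> sph_arc x y \<noteq> {} \<or> sph_arc x y \<inter> uminus ` sph_arc a b \<noteq> {}"
proof -
  obtain z where z: "z \<in> sph_arc x y" "cross3 a b \<bullet> z = 0"
    using sph_arc_meets_plane [OF cross] .
  have "cross3 a b \<noteq> 0"
    using cross(2) by auto
  with z(2) obtain \<alpha> \<beta> where z_eq: "z = \<alpha> *\<^sub>R a + \<beta> *\<^sub>R b"
    by (metis inner_commute orthogonal_cross3_imp_combination)
  have "0 \<le> v1 \<bullet> z" "0 \<le> v2 \<bullet> z"
    using inner_sph_arc_nonneg [OF z(1)] v1(3,4) v2(3,4) by blast+
  then have signs: "(0 \<le> \<alpha> \<and> 0 \<le> \<beta>) \<or> (\<alpha> \<le> 0 \<and> \<beta> \<le> 0)"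
    using separated_combination_signs [OF v1(1,2) v2(1,2)] unfolding z_eq by blast
  have "norm z = 1"
    using z(1) unfolding sph_arc_def by blast
  have "- z = (- \<alpha>) *\<^sub>R a + (- \<beta>) *\<^sub>R b"
    unfolding z_eq by simp
  with signs \<open>norm z = 1\<close> z_eq have "z \<in> sph_arc a b \<or> - z \<in> sph_arc a b"
    unfolding sph_arc_def by (smt (verit) mem_Collect_eq norm_minus_cancel)
  with z(1) show ?thesis
    by (metis IntI empty_iff image_eqI minus_minus)
qed

lemma spherical_polygon_triple_product_nonzero:
  assumes "spherical_polygon u n" and "p < n" "q < n" "k < n" and "p \<noteq> q" "q \<noteq> k" "p \<noteq> k"
  shows "cross3 (u p) (u q) \<bullet> u k \<noteq> 0"
  using assms common_normal_if_triple_product_zero [of "u p" "u q" "u k"]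
  unfolding spherical_polygon_def by blast

lemma inj_on_spherical_polygon:
  assumes "spherical_polygon u n"
  shows "inj_on u {..<n}"
proof (rule inj_onI, rule ccontr)
  fix p q
  assume "p \<in> {..<n}" "q \<in> {..<n}" "u p = u q" "p \<noteq> q"
  define k where "k = (if 0 \<notin> {p, q} then 0 else if 1 \<notin> {p, q} then 1 else (2::nat))"
  have "k < n" "k \<noteq> p" "k \<noteq> q"
    using assms \<open>p \<noteq> q\<close> unfolding k_def spherical_polygon_def by auto
  with \<open>p \<in> {..<n}\<close> \<open>q \<in> {..<n}\<close> \<open>p \<noteq> q\<close>
  have "cross3 (u p) (u q) \<bullet> u k \<noteq> 0"
    by (intro spherical_polygon_triple_product_nonzero [OF assms]) auto
  with \<open>u p = u q\<close> show False
    by simp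
qed

lemma balanced_vertex_set_imp_negative:
  assumes "spherical_polygon u n" and "balanced (vertex_set u n)" and "v \<noteq> 0"
  obtains k where "k < n" and "v \<bullet> u k < 0"
proof -
  have "\<not> vertex_set u n \<subseteq> closed_hemisphere v"
    using assms(2,3) unfolding balanced_def in_closed_hemisphere_def by blast
  then obtain k where "k < n" "u k \<notin> closed_hemisphere v"
    unfolding vertex_set_def by blast
  moreover have "norm (u k) = 1"
    using assms(1) \<open>k < n\<close> unfolding spherical_polygon_def by blast
  ultimately have "v \<bullet> u k < 0"
    unfolding closed_hemisphere_def by auto
  with \<open>k < n\<close> show thesis
    by (rule that)
qed

lemma essential_imp_separating_normal:
  assumes "spherical_polygon u n" and "balanced (vertex_set u n)" and "essential u n m"
  obtains v where "v \<bullet> u m < 0" and "\<And>k. k < n \<Longrightarrow> k \<noteq> m \<Longrightarrow> 0 \<le> v \<bullet> u k"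
proof -
  obtain v where "v \<noteq> 0" and v: "vertex_set u n - {u m} \<subseteq> closed_hemisphere v"
    using assms(3) unfolding essential_def balanced_def in_closed_hemisphere_def by blast
  have nonneg: "0 \<le> v \<bullet> u k" if "k < n" "k \<noteq> m" for k
  proof -
    have "m < n"
      using assms(3) unfolding essential_def by simp
    with that have "u k \<noteq> u m"
      using inj_onD [OF inj_on_spherical_polygon [OF assms(1)], of k m] by auto
    with v that show ?thesis
      unfolding vertex_set_def closed_hemisphere_def by blast
  qed
  obtain k where "k < n" "v \<bullet> u k < 0"
    using balanced_vertex_set_imp_negative [OF assms(1,2) \<open>v \<noteq> 0\<close>] .
  with nonneg have "k = m"
    by (meson not_le)
  with that \<open>v \<bullet> u k < 0\<close> nonneg show thesis
    by blast
qed

definition rotate_polygon :: "(nat \<Rightarrow> pt) \<Rightarrow> nat \<Rightarrow> nat \<Rightarrow> nat \<Rightarrow> pt" where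
  "rotate_polygon u n i k = u ((i + k) mod n)"

lemma add_mod_eq_add_mod_iff:
  fixes i k l n :: nat
  assumes "k < n" and "l < n"
  shows "(i + k) mod n = (i + l) mod n \<longleftrightarrow> k = l"
proof
  assume "(i + k) mod n = (i + l) mod n"
  then have "k mod n = l mod n"
    by (simp add: nat_mod_eq_iff)
  with assms show "k = l"
    by simp
qed simp

lemma image_add_mod:
  assumes "0 < n"
  shows "(\<lambda>k. (i + k) mod n) ` {..<n :: nat} = {..<n}"
proof (rule endo_inj_surj)
  show "inj_on (\<lambda>k. (i + k) mod n) {..<n}"
    by (rule inj_onI) (simp add: add_mod_eq_add_mod_iff)
qed (use assms in auto)

lemma spherical_polygon_rotate:
  assumes "spherical_polygon u n"
  shows "spherical_polygon (rotate_polygon u n i) n"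
proof -
  have idx: "(i + k) mod n < n" for k
    using assms unfolding spherical_polygon_def by simp
  have general_position: "\<not> (\<exists>v. v \<noteq> 0 \<and> v \<bullet> u a = 0 \<and> v \<bullet> u b = 0 \<and> v \<bullet> u c = 0)"
    if "a < n" "b < n" "c < n" "a \<noteq> b" "b \<noteq> c" "a \<noteq> c" for a b c
    using assms that unfolding spherical_polygon_def by blast
  have "\<not> (\<exists>v. v \<noteq> 0 \<and> v \<bullet> u ((i + p) mod n) = 0 \<and> v \<bullet> u ((i + q) mod n) = 0 \<and> v \<bullet> u ((i + r) mod n) = 0)"
    if "p < n" "q < n" "r < n" "p \<noteq> q" "q \<noteq> r" "p \<noteq> r" for p q r
    using that by (intro general_position idx) (simp_all add: add_mod_eq_add_mod_iff)
  moreover have "norm (u ((i + k) mod n)) = 1" for k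
    using assms idx unfolding spherical_polygon_def by blast
  moreover have "3 \<le> n"
    using assms unfolding spherical_polygon_def by blast
  ultimately show ?thesis
    unfolding spherical_polygon_def rotate_polygon_def by blast
qed

lemma vertex_set_rotate:
  assumes "0 < n"
  shows "vertex_set (rotate_polygon u n i) n = vertex_set u n"
  using image_add_mod [OF assms, of i]
  unfolding vertex_set_def rotate_polygon_def by (metis image_image)

lemma edge_rotate: "edge (rotate_polygon u n i) n k = edge u n ((i + k) mod n)"
  unfolding edge_def rotate_polygon_def by (simp add: mod_add_right_eq mod_Suc_eq)

lemma nonadjacent_edges_rotate:
  assumes "nonadjacent_edges n k l"
  shows "nonadjacent_edges n ((i + k) mod n) ((i + l) mod n)"
proof -
  have shift_Suc: "Suc ((i + k) mod n) mod n = (i + Suc k mod n) mod n" for k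
    by (simp add: mod_add_right_eq mod_Suc_eq)
  show ?thesis
    using assms unfolding nonadjacent_edges_def shift_Suc by (simp add: add_mod_eq_add_mod_iff)
qed

lemma self_intersecting_rotate:
  assumes "self_intersecting (rotate_polygon u n i) n"
  shows "self_intersecting u n"
proof -
  obtain k l where "nonadjacent_edges n k l" "edge u n ((i + k) mod n) \<inter> edge u n ((i + l) mod n) \<noteq> {}"
    using assms unfolding self_intersecting_def edge_rotate by blast
  then show ?thesis
    unfolding self_intersecting_def by (blast dest: nonadjacent_edges_rotate)
qed

lemma antipodal_intersecting_rotate:
  assumes "antipodal_intersecting (rotate_polygon u n i) n"
  shows "antipodal_intersecting u n"
proof -
  obtain k l where "nonadjacent_edges n k l"
    "edge u n ((i + k) mod n) \<inter> uminus ` edge u n ((i + l) mod n) \<noteq> {}"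
    using assms unfolding antipodal_intersecting_def edge_rotate by blast
  then show ?thesis
    unfolding antipodal_intersecting_def by (blast dest: nonadjacent_edges_rotate)
qed

lemma essential_rotate:
  assumes "k < n"
  shows "essential (rotate_polygon u n i) n k \<longleftrightarrow> essential u n ((i + k) mod n)"
proof -
  have "vertex_set (rotate_polygon u n i) n = vertex_set u n"
    using assms by (simp add: vertex_set_rotate)
  with assms show ?thesis
    unfolding essential_def by (simp add: rotate_polygon_def)
qed

lemma edge_crossing_great_circle:
  fixes w :: "nat \<Rightarrow> pt"
  defines "N \<equiv> cross3 (w 0) (w 1)"
  assumes poly: "spherical_polygon w n" and bal: "balanced (vertex_set w n)"
  obtains d where "2 \<le> d" "Suc d < n" "(N \<bullet> w d) * (N \<bullet> w (Suc d)) < 0"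
proof -
  define f where "f k = N \<bullet> w k" for k
  have f_nonzero: "f k \<noteq> 0" if "2 \<le> k" "k < n" for k
    using spherical_polygon_triple_product_nonzero [OF poly, of 0 1 k] that poly
    unfolding f_def N_def spherical_polygon_def by simp
  have "f 0 = 0" "f 1 = 0"
    unfolding f_def N_def by (simp_all add: dot_cross_self)
  have "N \<noteq> 0"
    using f_nonzero [of 2] poly unfolding f_def spherical_polygon_def by auto
  obtain k1 where k1: "k1 < n" "f k1 < 0"
    using balanced_vertex_set_imp_negative [OF poly bal \<open>N \<noteq> 0\<close>] unfolding f_def .
  obtain k2 where k2: "k2 < n" "f k2 > 0"
    using balanced_vertex_set_imp_negative [OF poly bal, of "- N"] \<open>N \<noteq> 0\<close> unfolding f_def by auto
  have "k1 \<noteq> 0" "k1 \<noteq> 1" "k2 \<noteq> 0" "k2 \<noteq> 1"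
    using k1 k2 \<open>f 0 = 0\<close> \<open>f 1 = 0\<close> by (metis less_irrefl)+
  then have "2 \<le> min k1 k2"
    by simp
  have "min k1 k2 \<le> max k1 k2"
    by linarith
  moreover have "f (min k1 k2) * f (max k1 k2) < 0"
    using k1(2) k2(2) by (cases "k1 \<le> k2") (auto simp: mult_neg_pos mult_pos_neg)
  ultimately obtain d where d: "d \<in> {min k1 k2..<max k1 k2}" "f d * f (Suc d) \<le> 0"
    using nat_sign_change by blast
  then have "2 \<le> d" "Suc d < n"
    using \<open>2 \<le> min k1 k2\<close> k1(1) k2(1) by auto
  moreover have "f d * f (Suc d) < 0"
    using d(2) f_nonzero [OF \<open>2 \<le> d\<close>] f_nonzero [of "Suc d"] \<open>2 \<le> d\<close> \<open>Suc d < n\<close>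
    by (simp add: order.strict_iff_order)
  ultimately show thesis
    using that unfolding f_def by blast
qed

lemma consecutive_vertices_not_both_essential:
  assumes poly: "spherical_polygon w n" and bal: "balanced (vertex_set w n)"
    and "\<not> self_intersecting w n" and "\<not> antipodal_intersecting w n"
    and "essential w n 0"
  shows "\<not> essential w n 1"
proof
  assume "essential w n 1"
  obtain d where d: "2 \<le> d" "Suc d < n"
    and crossing: "(cross3 (w 0) (w 1) \<bullet> w d) * (cross3 (w 0) (w 1) \<bullet> w (Suc d)) < 0"
    using edge_crossing_great_circle [OF poly bal] .
  obtain v1 where v1: "v1 \<bullet> w 0 < 0" "\<And>k. k < n \<Longrightarrow> k \<noteq> 0 \<Longrightarrow> 0 \<le> v1 \<bullet> w k"
    using essential_imp_separating_normal [OF poly bal \<open>essential w n 0\<close>] by blast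
  obtain v2 where v2: "v2 \<bullet> w 1 < 0" "\<And>k. k < n \<Longrightarrow> k \<noteq> 1 \<Longrightarrow> 0 \<le> v2 \<bullet> w k"
    using essential_imp_separating_normal [OF poly bal \<open>essential w n 1\<close>] by blast
  have "cross3 (w d) (w (Suc d)) \<noteq> 0"
    using spherical_polygon_triple_product_nonzero [OF poly, of d "Suc d" 0] d by auto
  with crossing v1 v2 d
  have "sph_arc (w 0) (w 1) \<inter> sph_arc (w d) (w (Suc d)) \<noteq> {}
      \<or> sph_arc (w d) (w (Suc d)) \<inter> uminus ` sph_arc (w 0) (w 1) \<noteq> {}"
    by (intro crossing_arc_meets_arc_or_antipode) auto
  moreover have "edge w n 0 = sph_arc (w 0) (w 1)" "edge w n d = sph_arc (w d) (w (Suc d))"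
    using d unfolding edge_def by simp_all
  moreover have "nonadjacent_edges n 0 d" "nonadjacent_edges n d 0"
    using d unfolding nonadjacent_edges_def by auto
  ultimately show False
    using assms(3,4) unfolding self_intersecting_def antipodal_intersecting_def by blast
qed

theorem lemma9:
  fixes u :: "nat \<Rightarrow> real^3" and n :: nat
  assumes "spherical_polygon u n"
    and "n \<ge> 6"
    and "balanced (vertex_set u n)"
    and "\<not> self_intersecting u n"
    and "\<not> antipodal_intersecting u n"
    and "card {m. essential u n m} = 2"
  shows "\<forall>i j. essential u n i \<and> essential u n j \<longrightarrow> j \<noteq> Suc i mod n"
proof (intro allI impI notI)
  fix i j
  assume "essential u n i \<and> essential u n j" and "j = Suc i mod n"
  let ?w = "rotate_polygon u n i"
  have "i < n"
    using \<open>essential u n i \<and> essential u n j\<close> unfolding essential_def by simp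
  then have "essential ?w n 0" "essential ?w n 1"
    using \<open>essential u n i \<and> essential u n j\<close> \<open>j = Suc i mod n\<close> assms(2)
    by (simp_all add: essential_rotate)
  moreover have "spherical_polygon ?w n" "balanced (vertex_set ?w n)"
    using assms(1,3) \<open>i < n\<close> by (simp_all add: spherical_polygon_rotate vertex_set_rotate)
  moreover have "\<not> self_intersecting ?w n" "\<not> antipodal_intersecting ?w n"
    using assms(4,5) self_intersecting_rotate antipodal_intersecting_rotate by blast+
  ultimately show False
    using consecutive_vertices_not_both_essential by blast
qed

end
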